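(* Let $M_1$ and $M_2$ be uniformly dense matroids on the same finite ground set $E$. Then their intersection $M_1\wedge M_2$ is a uniformly dense matroid on $E$.
   Context: For a matroid $M=(E,\mathcal{B})$, the dual is $M^\star=(E,\{E\setminus B: B\in\mathcal{B}\})$. The union of matroids $M_1=(E,\mathcal{B}_1)$, $M_2=(E,\mathcal{B}_2)$ is the matroid on $E$ whose bases are the inclusion-maximal sets among $\{B_1\cup B_2: B_1\in\mathcal{B}_1,B_2\in\mathcal{B}_2\}$. The intersection is $M_1\wedge M_2=(M_1^\star\vee M_2^\star)^\star$. With $\operatorname{rank}(A)=\max_B|A\cap B|$ and $\rho(A)=|A|/\operatorname{rank}(A)$, a matroid is uniformly dense if $\rho(A)\le\rho(E)$ for all nonempty $A\subseteq E$ (matroids assumed loopless). *)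

theory Defs
  imports Main "HOL-Library.Extended_Real"
begin

definition matroid :: "'a set \<Rightarrow> 'a set set \<Rightarrow> bool" where
  "matroid E \<B> \<longleftrightarrow> finite E \<and> \<B> \<noteq> {} \<and> (\<forall>X\<in>\<B>. X \<subseteq> E) \<and>
     (\<forall>B1\<in>\<B>. \<forall>B2\<in>\<B>. \<forall>x\<in>B1 - B2. \<exists>y\<in>B2 - B1. insert y (B1 - {x}) \<in> \<B>)"

definition dual_bases :: "'a set \<Rightarrow> 'a set set \<Rightarrow> 'a set set" where
  "dual_bases E \<B> = (\<lambda>X. E - X) ` \<B>"

definition union_bases :: "'a set set \<Rightarrow> 'a set set \<Rightarrow> 'a set set" where
  "union_bases \<B>1 \<B>2 =
     (let U = {B1 \<union> B2 | B1 B2. B1 \<in> \<B>1 \<and> B2 \<in> \<B>2}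
      in {X \<in> U. \<not> (\<exists>Y\<in>U. X \<subset> Y)})"

definition inter_bases :: "'a set \<Rightarrow> 'a set set \<Rightarrow> 'a set set \<Rightarrow> 'a set set" where
  "inter_bases E \<B>1 \<B>2 = dual_bases E (union_bases (dual_bases E \<B>1) (dual_bases E \<B>2))"

definition mrank :: "'a set set \<Rightarrow> 'a set \<Rightarrow> nat" where
  "mrank \<B> A = Max ((\<lambda>B. card (A \<inter> B)) ` \<B>)"

definition density :: "'a set set \<Rightarrow> 'a set \<Rightarrow> ereal" where
  "density \<B> A = (if mrank \<B> A = 0 then \<infinity> else ereal (real (card A) / real (mrank \<B> A)))"

definition loopless :: "'a set \<Rightarrow> 'a set set \<Rightarrow> bool" where
  "loopless E \<B> \<longleftrightarrow> (\<forall>e\<in>E. mrank \<B> {e} > 0)"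

definition uniformly_dense :: "'a set \<Rightarrow> 'a set set \<Rightarrow> bool" where
  "uniformly_dense E \<B> \<longleftrightarrow> (\<forall>A. A \<subseteq> E \<and> A \<noteq> {} \<longrightarrow> density \<B> A \<le> density \<B> E)"

end

theory Submission
  imports Defs
begin

(*
  Everything is translated into rank functions. The intersection is the dual of the union of the
  duals, and the union of matroids with rank functions r1, r2 has rank function given by
  Nash-Williams' formula, the minimum over T \<subseteq> A of |A - T| + r1 T + r2 T. That its bases are the
  maximal unions of bases is the matroid partition theorem, which follows from the hard half of
  Edmonds' matroid intersection theorem. Uniform density of a matroid of rank r on E says that
  r(E) |A| \<le> |E| r(A) for all A \<subseteq> E; this passes to the dual by a direct computation, and to the
  union by evaluating it at a minimising T of Nash-Williams' formula.
*)

lemma card_eq_card_add_card_Diff: "finite X \<Longrightarrow> T \<subseteq> X \<Longrightarrow> card X = card T + card (X - T)"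
  using card_Int_Diff[of X T] by (simp add: Int_absorb1)

section \<open>Rank functions\<close>

definition rank_function :: "'a set \<Rightarrow> ('a set \<Rightarrow> nat) \<Rightarrow> bool" where
  "rank_function G r \<longleftrightarrow> finite G \<and> (\<forall>X\<subseteq>G. r X \<le> card X) \<and>
     (\<forall>X Y. X \<subseteq> Y \<and> Y \<subseteq> G \<longrightarrow> r X \<le> r Y) \<and>
     (\<forall>X Y. X \<subseteq> G \<and> Y \<subseteq> G \<longrightarrow> r (X \<union> Y) + r (X \<inter> Y) \<le> r X + r Y)"

lemma rank_functionD:
  assumes "rank_function G r"
  shows "finite G" and rank_le_card: "X \<subseteq> G \<Longrightarrow> r X \<le> card X"
    and rank_mono: "X \<subseteq> Y \<Longrightarrow> Y \<subseteq> G \<Longrightarrow> r X \<le> r Y"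
    and rank_submodular: "X \<subseteq> G \<Longrightarrow> Y \<subseteq> G \<Longrightarrow> r (X \<union> Y) + r (X \<inter> Y) \<le> r X + r Y"
  using assms unfolding rank_function_def by blast+

lemma rank_empty: "rank_function G r \<Longrightarrow> r {} = 0"
  using rank_le_card[of G r "{}"] by simp

lemma rank_Un_le: "rank_function G r \<Longrightarrow> X \<subseteq> G \<Longrightarrow> Y \<subseteq> G \<Longrightarrow> r (X \<union> Y) \<le> r X + r Y"
  using rank_submodular[of G r X Y] by simp

lemma rank_insert_le: "rank_function G r \<Longrightarrow> X \<subseteq> G \<Longrightarrow> x \<in> G \<Longrightarrow> r (insert x X) \<le> r X + r {x}"
  using rank_Un_le[of G r X "{x}"] by simp

lemma rank_singleton_le: "rank_function G r \<Longrightarrow> x \<in> G \<Longrightarrow> r {x} \<le> 1"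
  using rank_le_card[of G r "{x}"] by simp

lemma rank_le_card_add_rank_compl: "rank_function G r \<Longrightarrow> Y \<subseteq> G \<Longrightarrow> r G \<le> card Y + r (G - Y)"
  using rank_Un_le[of G r Y "G - Y"] rank_le_card[of G r Y] by (simp add: Un_absorb1)

lemma rank_function_subset: "rank_function G r \<Longrightarrow> G' \<subseteq> G \<Longrightarrow> rank_function G' r"
  unfolding rank_function_def by (meson finite_subset order_trans)

lemma rank_indep_subset:
  assumes r: "rank_function G r" and "X \<subseteq> G" "r X = card X" "Y \<subseteq> X"
  shows "r Y = card Y"
proof -
  have "finite X" using assms rank_functionD(1) finite_subset by blast
  then have "card X = card Y + card (X - Y)" using assms(4) by (rule card_eq_card_add_card_Diff)
  moreover have "Y \<subseteq> G" "X - Y \<subseteq> G" "Y \<union> (X - Y) = X" using assms(2,4) by auto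
  then have "r X \<le> r Y + r (X - Y)" using rank_Un_le[OF r, of Y "X - Y"] by simp
  moreover have "r Y \<le> card Y" "r (X - Y) \<le> card (X - Y)"
    using rank_le_card[OF r] \<open>Y \<subseteq> G\<close> \<open>X - Y \<subseteq> G\<close> by auto
  ultimately show ?thesis using assms(3) by linarith
qed

lemma rank_Un_eq:
  assumes r: "rank_function G r" and S: "S \<subseteq> G" and "Y \<subseteq> G"
    and "\<forall>y\<in>Y. r (insert y S) = r S"
  shows "r (S \<union> Y) = r S"
proof -
  have "finite Y" using assms rank_functionD(1) finite_subset by blast
  then show ?thesis using assms(3,4)
  proof (induction Y rule: finite_induct)
    case empty
    then show ?case by simp
  next
    case (insert y Y)
    then have IH: "r (S \<union> Y) = r S" and y: "y \<in> G" "r (insert y S) = r S" by auto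
    have "(S \<union> Y) \<union> insert y S = S \<union> insert y Y" by auto
    moreover have "S \<union> Y \<subseteq> G" "insert y S \<subseteq> G" using insert.prems S by auto
    ultimately have "r (S \<union> insert y Y) + r ((S \<union> Y) \<inter> insert y S) \<le> r (S \<union> Y) + r (insert y S)"
      using rank_submodular[OF r, of "S \<union> Y" "insert y S"] by simp
    moreover have "r S \<le> r ((S \<union> Y) \<inter> insert y S)"
      using rank_mono[OF r, of S "(S \<union> Y) \<inter> insert y S"] \<open>S \<union> Y \<subseteq> G\<close> by blast
    moreover have "r S \<le> r (S \<union> insert y Y)"
      using rank_mono[OF r, of S "S \<union> insert y Y"] \<open>S \<union> Y \<subseteq> G\<close> y by blast
    ultimately show ?case using IH y by linarith
  qed
qed

lemma rank_extend:
  assumes r: "rank_function G r" and "A \<subseteq> G" "I \<subseteq> A" "r I = card I"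
  obtains J where "I \<subseteq> J" "J \<subseteq> A" "r J = card J" "r J = r A"
proof -
  have fA: "finite A" using assms rank_functionD(1) finite_subset by blast
  let ?P = "\<lambda>J. I \<subseteq> J \<and> J \<subseteq> A \<and> r J = card J"
  have start: "?P I" using assms(3,4) by blast
  have bound: "\<forall>J. ?P J \<longrightarrow> card J < Suc (card A)"
    using fA by (meson card_mono le_imp_less_Suc)
  obtain J where J: "?P J" and max: "\<forall>J'. ?P J' \<longrightarrow> card J' \<le> card J"
    using ex_has_greatest_nat[OF start bound] by blast
  have JG: "J \<subseteq> G" using J assms by blast
  have "r (insert y J) = r J" if y: "y \<in> A - J" for y
  proof (rule ccontr)
    assume "r (insert y J) \<noteq> r J"
    moreover have "r (insert y J) \<le> r J + 1"
      using rank_insert_le[OF r JG] rank_singleton_le[OF r] y assms(2) by force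
    moreover have "r J \<le> r (insert y J)" using rank_mono[OF r, of J "insert y J"] y assms(2) JG by blast
    moreover have "finite J" using J fA finite_subset by blast
    then have "card (insert y J) = card J + 1" using y by simp
    ultimately have "r (insert y J) = card (insert y J)" using J by simp
    then have "?P (insert y J)" using J y by auto
    then have "card (insert y J) \<le> card J" using max by blast
    then show False using \<open>card (insert y J) = card J + 1\<close> by simp
  qed
  then have "r (J \<union> (A - J)) = r J" using rank_Un_eq[OF r JG, of "A - J"] assms(2) by blast
  moreover have "J \<union> (A - J) = A" using J by blast
  ultimately have "r J = r A" by simp
  then show thesis using that J by blast
qed

lemma rank_function_contract:
  assumes r: "rank_function G r" and e: "e \<in> G" "r {e} = 1"
  shows "rank_function (G - {e}) (\<lambda>X. r (insert e X) - 1)"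
  unfolding rank_function_def
proof (intro conjI allI impI)
  have pos: "1 \<le> r (insert e X)" if "X \<subseteq> G - {e}" for X
    using rank_mono[OF r, of "{e}" "insert e X"] e that by auto
  show "finite (G - {e})" using rank_functionD(1)[OF r] by simp
  show "r (insert e X) - 1 \<le> card X" if "X \<subseteq> G - {e}" for X
    using rank_insert_le[OF r, of X e] rank_le_card[OF r, of X] e that by (simp add: subset_Diff_insert)
  show "r (insert e X) - 1 \<le> r (insert e Y) - 1" if "X \<subseteq> Y \<and> Y \<subseteq> G - {e}" for X Y
    by (intro diff_le_mono rank_mono[OF r]) (use e that in auto)
  show "r (insert e (X \<union> Y)) - 1 + (r (insert e (X \<inter> Y)) - 1) \<le> r (insert e X) - 1 + (r (insert e Y) - 1)"
    if XY: "X \<subseteq> G - {e} \<and> Y \<subseteq> G - {e}" for X Y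
  proof -
    have "r (insert e X \<union> insert e Y) + r (insert e X \<inter> insert e Y) \<le> r (insert e X) + r (insert e Y)"
      using rank_submodular[OF r, of "insert e X" "insert e Y"] XY e by auto
    moreover have "1 \<le> r (insert e (X \<inter> Y))" "1 \<le> r (insert e X)" "1 \<le> r (insert e Y)"
      using pos[of "X \<inter> Y"] pos[of X] pos[of Y] XY by auto
    ultimately show ?thesis using pos[of "X \<union> Y"] XY by (simp add: insert_absorb)
  qed
qed

definition rank_bases :: "'a set \<Rightarrow> ('a set \<Rightarrow> nat) \<Rightarrow> 'a set set" where
  "rank_bases G r = {X. X \<subseteq> G \<and> r X = card X \<and> card X = r G}"

lemma rank_bases_extend:
  assumes r: "rank_function G r" and "I \<subseteq> G" "r I = card I"
  obtains B where "B \<in> rank_bases G r" "I \<subseteq> B"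
proof -
  obtain J where "I \<subseteq> J" "J \<subseteq> G" "r J = card J" "r J = r G"
    using rank_extend[OF r order_refl assms(2,3)] by blast
  then show thesis using that unfolding rank_bases_def by auto
qed

lemma rank_bases_matroid:
  assumes r: "rank_function G r"
  shows "matroid G (rank_bases G r)"
  unfolding matroid_def
proof (intro conjI ballI)
  show "finite G" using rank_functionD(1)[OF r] .
  obtain B where "B \<in> rank_bases G r" using rank_bases_extend[OF r, of "{}"] rank_empty[OF r] by auto
  then show "rank_bases G r \<noteq> {}" by blast
  show "X \<subseteq> G" if "X \<in> rank_bases G r" for X using that unfolding rank_bases_def by blast
  show "\<exists>y\<in>B2 - B1. insert y (B1 - {x}) \<in> rank_bases G r"
    if B1: "B1 \<in> rank_bases G r" and B2: "B2 \<in> rank_bases G r" and x: "x \<in> B1 - B2" for B1 B2 x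
  proof (rule ccontr)
    assume no_exchange: "\<not> (\<exists>y\<in>B2 - B1. insert y (B1 - {x}) \<in> rank_bases G r)"
    let ?S = "B1 - {x}"
    have B1G: "B1 \<subseteq> G" "r B1 = card B1" "card B1 = r G" using B1 unfolding rank_bases_def by auto
    have B2G: "B2 \<subseteq> G" "r B2 = card B2" "card B2 = r G" using B2 unfolding rank_bases_def by auto
    have "finite B1" using B1G(1) rank_functionD(1)[OF r] finite_subset by blast
    then have cS: "card ?S + 1 = card B1" using card_Suc_Diff1[of B1 x] x by simp
    have SG: "?S \<subseteq> G" and rS: "r ?S = card ?S" using rank_indep_subset[OF r B1G(1,2)] B1G(1) by auto
    have "r (insert y ?S) = r ?S" if y: "y \<in> B2 - B1" for y
    proof -
      have yG: "y \<in> G" using y B2G(1) by blast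
      have "r (insert y ?S) \<le> r ?S + 1"
        using rank_insert_le[OF r SG yG] rank_singleton_le[OF r yG] by linarith
      moreover have "r ?S \<le> r (insert y ?S)" using rank_mono[OF r, of ?S "insert y ?S"] SG yG by blast
      moreover have "card (insert y ?S) = card B1" using y cS \<open>finite B1\<close> by simp
      moreover have "r (insert y ?S) \<noteq> card B1"
      proof
        assume "r (insert y ?S) = card B1"
        then have "insert y ?S \<in> rank_bases G r"
          unfolding rank_bases_def using SG yG B1G(3) \<open>card (insert y ?S) = card B1\<close> by simp
        then show False using no_exchange y by blast
      qed
      ultimately show ?thesis using rS cS by linarith
    qed
    then have "r (?S \<union> (B2 - B1)) = r ?S" using rank_Un_eq[OF r SG, of "B2 - B1"] B2G(1) by blast
    moreover have "r B2 \<le> r (?S \<union> (B2 - B1))"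
      using rank_mono[OF r, of B2 "?S \<union> (B2 - B1)"] x B1G(1) B2G(1) by blast
    ultimately show False using rS cS B1G(3) B2G(2,3) by linarith
  qed
qed

lemma mrank_rank_bases:
  assumes r: "rank_function G r" and A: "A \<subseteq> G"
  shows "mrank (rank_bases G r) A = r A"
proof -
  have fin: "finite (rank_bases G r)"
    using rank_functionD(1)[OF r] unfolding rank_bases_def by (simp add: finite_subset[of _ "Pow G"] subset_iff)
  have upper: "card (A \<inter> B) \<le> r A" if "B \<in> rank_bases G r" for B
  proof -
    have "B \<subseteq> G" "r B = card B" using that unfolding rank_bases_def by auto
    then have "r (A \<inter> B) = card (A \<inter> B)" using rank_indep_subset[OF r] by blast
    moreover have "r (A \<inter> B) \<le> r A" using rank_mono[OF r, of "A \<inter> B" A] A by blast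
    ultimately show ?thesis by simp
  qed
  obtain I where I: "I \<subseteq> A" "r I = card I" "r I = r A"
    using rank_extend[OF r A, of "{}"] rank_empty[OF r] by auto
  obtain B where B: "B \<in> rank_bases G r" "I \<subseteq> B" using rank_bases_extend[OF r, of I] I A by blast
  have "finite A" using A rank_functionD(1)[OF r] finite_subset by blast
  then have "card I \<le> card (A \<inter> B)" using I(1) B(2) by (intro card_mono) auto
  then have "card (A \<inter> B) = r A" using upper[OF B(1)] I by linarith
  then show ?thesis
    unfolding mrank_def using fin upper B(1) by (intro Max_eqI) (auto intro!: image_eqI[of _ _ B])
qed

section \<open>Matroids given by their bases\<close>

definition indep :: "'a set set \<Rightarrow> 'a set \<Rightarrow> bool" where
  "indep \<B> X \<longleftrightarrow> (\<exists>B\<in>\<B>. X \<subseteq> B)"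

lemma indep_subset: "indep \<B> X \<Longrightarrow> Y \<subseteq> X \<Longrightarrow> indep \<B> Y"
  unfolding indep_def by blast

lemma matroidD:
  assumes "matroid E \<B>"
  shows "finite E" "\<B> \<noteq> {}" "B \<in> \<B> \<Longrightarrow> B \<subseteq> E"
    "B1 \<in> \<B> \<Longrightarrow> B2 \<in> \<B> \<Longrightarrow> x \<in> B1 - B2 \<Longrightarrow> \<exists>y\<in>B2 - B1. insert y (B1 - {x}) \<in> \<B>"
  using assms unfolding matroid_def by blast+

lemma matroid_finite_bases: "matroid E \<B> \<Longrightarrow> finite \<B>"
  using matroidD(1,3) finite_subset[of \<B> "Pow E"] by blast

lemma matroid_finite_base: "matroid E \<B> \<Longrightarrow> B \<in> \<B> \<Longrightarrow> finite B"
  using matroidD(1,3) finite_subset by metis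

lemma matroid_card_base_le:
  assumes m: "matroid E \<B>" and "B1 \<in> \<B>" "B2 \<in> \<B>"
  shows "card B1 \<le> card B2"
  using assms(2)
proof (induction "card (B1 - B2)" arbitrary: B1)
  case 0
  then have "B1 \<subseteq> B2" using matroid_finite_base[OF m] by auto
  then show ?case using card_mono matroid_finite_base[OF m assms(3)] by blast
next
  case (Suc n)
  have fB1: "finite B1" using matroid_finite_base[OF m Suc.prems] .
  obtain x where x: "x \<in> B1 - B2" using Suc.hyps(2) by (metis card.empty ex_in_conv nat.distinct(1))
  obtain y where y: "y \<in> B2 - B1" "insert y (B1 - {x}) \<in> \<B>"
    using matroidD(4)[OF m Suc.prems assms(3) x] by blast
  have "insert y (B1 - {x}) - B2 = (B1 - B2) - {x}" using x y by auto
  then have "card (insert y (B1 - {x})) \<le> card B2" using Suc x fB1 y(2) by simp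
  moreover have "card (insert y (B1 - {x})) = card B1"
    using x y fB1 by (metis DiffD1 DiffD2 card_Suc_Diff1 card_insert_disjoint finite_Diff insert_iff)
  ultimately show ?case by simp
qed

lemma matroid_card_base_eq: "matroid E \<B> \<Longrightarrow> B1 \<in> \<B> \<Longrightarrow> B2 \<in> \<B> \<Longrightarrow> card B1 = card B2"
  using matroid_card_base_le by (metis le_antisym)

lemma matroid_bases_close:
  assumes m: "matroid E \<B>" and B1: "B1 \<in> \<B>" and "indep \<B> I"
  obtains B2 where "B2 \<in> \<B>" "I \<subseteq> B2" "B2 \<subseteq> I \<union> B1"
proof -
  let ?P = "\<lambda>B. B \<in> \<B> \<and> I \<subseteq> B" and ?excess = "\<lambda>B. card (B - (I \<union> B1))"
  obtain B0 where "?P B0" using assms(3) unfolding indep_def by blast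
  then obtain B2 where B2: "?P B2" and min: "\<forall>B. ?P B \<longrightarrow> ?excess B2 \<le> ?excess B"
    using ex_has_least_nat[of ?P B0 ?excess] by blast
  have "x \<in> I \<union> B1" if x: "x \<in> B2" for x
  proof (rule ccontr)
    assume x_out: "x \<notin> I \<union> B1"
    then obtain y where y: "y \<in> B1 - B2" "insert y (B2 - {x}) \<in> \<B>"
      using matroidD(4)[OF m _ B1, of B2 x] B2 x by blast
    have "?P (insert y (B2 - {x}))" using B2 y x_out by blast
    then have "?excess B2 \<le> ?excess (insert y (B2 - {x}))" using min by blast
    moreover have "insert y (B2 - {x}) - (I \<union> B1) = (B2 - (I \<union> B1)) - {x}" using y by blast
    moreover have "finite B2" using matroid_finite_base[OF m] B2 by blast
    then have "card ((B2 - (I \<union> B1)) - {x}) < ?excess B2"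
      using x x_out by (intro card_Diff1_less) auto
    ultimately show False by simp
  qed
  then show thesis using that B2 by blast
qed

lemma matroid_augment:
  assumes m: "matroid E \<B>" and "indep \<B> I" "indep \<B> J" and "card I < card J"
  shows "\<exists>y\<in>J - I. indep \<B> (insert y I)"
proof (rule ccontr)
  assume no_aug: "\<not> (\<exists>y\<in>J - I. indep \<B> (insert y I))"
  obtain B1 where B1: "B1 \<in> \<B>" "I \<subseteq> B1" using assms(2) unfolding indep_def by blast
  obtain B2 where B2: "B2 \<in> \<B>" "J \<subseteq> B2" "B2 \<subseteq> J \<union> B1"
    using matroid_bases_close[OF m B1(1) assms(3)] .
  have fin: "finite B1" "finite B2" using matroid_finite_base[OF m] B1(1) B2(1) by blast+
  have "B1 - B2 \<subseteq> I - J"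
  proof
    fix x assume x: "x \<in> B1 - B2"
    obtain y where y: "y \<in> B2 - B1" "insert y (B1 - {x}) \<in> \<B>"
      using matroidD(4)[OF m B1(1) B2(1) x] by blast
    have "x \<in> I"
    proof (rule ccontr)
      assume "x \<notin> I"
      then have "insert y I \<subseteq> insert y (B1 - {x})" using B1(2) by blast
      then have "indep \<B> (insert y I)" using y(2) unfolding indep_def by blast
      moreover have "y \<in> J - I" using y B1(2) B2(3) by blast
      ultimately show False using no_aug by blast
    qed
    then show "x \<in> I - J" using x B2(2) by blast
  qed
  moreover have "J - I \<subseteq> B2 - B1"
  proof
    fix y assume y: "y \<in> J - I"
    have "y \<notin> B1"
    proof
      assume "y \<in> B1"
      then have "indep \<B> (insert y I)" using B1 unfolding indep_def by blast
      then show False using no_aug y by blast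
    qed
    then show "y \<in> B2 - B1" using y B2(2) by blast
  qed
  moreover have "finite I" "finite J" using B1(2) B2(2) fin finite_subset by blast+
  ultimately have "card (B1 - B2) \<le> card (I - J)" "card (J - I) \<le> card (B2 - B1)"
    using fin by (simp_all add: card_mono)
  moreover have "card (B1 - B2) = card (B2 - B1)"
    using matroid_card_base_eq[OF m B1(1) B2(1)] card_Int_Diff[of B1 B2] card_Int_Diff[of B2 B1] fin
    by (simp add: Int_commute)
  moreover have "card I = card (I \<inter> J) + card (I - J)" "card J = card (I \<inter> J) + card (J - I)"
    using card_Int_Diff[of I J] card_Int_Diff[of J I] \<open>finite I\<close> \<open>finite J\<close> by (simp_all add: Int_commute)
  ultimately show False using assms(4) by linarith
qed

lemma mrank_attained:
  assumes "matroid E \<B>"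
  obtains B where "B \<in> \<B>" "card (A \<inter> B) = mrank \<B> A"
proof -
  have "mrank \<B> A \<in> (\<lambda>B. card (A \<inter> B)) ` \<B>"
    unfolding mrank_def using matroid_finite_bases[OF assms] matroidD(2)[OF assms] by (intro Max_in) auto
  then show thesis using that by (auto simp: image_iff)
qed

lemma indep_card_le_mrank:
  assumes m: "matroid E \<B>" and "A \<subseteq> E" "indep \<B> I" "I \<subseteq> A"
  shows "card I \<le> mrank \<B> A"
proof -
  obtain B where B: "B \<in> \<B>" "I \<subseteq> B" using assms(3) unfolding indep_def by blast
  have "finite A" using assms(2) matroidD(1)[OF m] finite_subset by blast
  then have "card I \<le> card (A \<inter> B)" using B(2) assms(4) by (intro card_mono) auto
  also have "\<dots> \<le> mrank \<B> A"
    unfolding mrank_def using matroid_finite_bases[OF m] B(1) by (intro Max_ge) auto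
  finally show ?thesis .
qed

lemma indep_extend_mrank:
  assumes m: "matroid E \<B>" and A: "A \<subseteq> E" and "indep \<B> I" "I \<subseteq> A"
  obtains J where "I \<subseteq> J" "J \<subseteq> A" "indep \<B> J" "card J = mrank \<B> A"
proof -
  have fA: "finite A" using A matroidD(1)[OF m] finite_subset by blast
  let ?P = "\<lambda>J. I \<subseteq> J \<and> J \<subseteq> A \<and> indep \<B> J"
  have start: "?P I" using assms(3,4) by blast
  have bound: "\<forall>J. ?P J \<longrightarrow> card J < Suc (card A)"
    using fA by (meson card_mono le_imp_less_Suc)
  obtain J where J: "?P J" and max: "\<forall>J'. ?P J' \<longrightarrow> card J' \<le> card J"
    using ex_has_greatest_nat[OF start bound] by blast
  obtain B where B: "B \<in> \<B>" "card (A \<inter> B) = mrank \<B> A" using mrank_attained[OF m] by blast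
  have "\<not> card J < card (A \<inter> B)"
  proof
    assume "card J < card (A \<inter> B)"
    moreover have "indep \<B> (A \<inter> B)" using B(1) unfolding indep_def by blast
    ultimately obtain y where y: "y \<in> A \<inter> B - J" "indep \<B> (insert y J)"
      using matroid_augment[OF m, of J "A \<inter> B"] J by blast
    then have "?P (insert y J)" using J by blast
    then have "card (insert y J) \<le> card J" using max by blast
    moreover have "finite J" using J fA finite_subset by blast
    ultimately show False using y(1) by simp
  qed
  moreover have "card J \<le> mrank \<B> A" using indep_card_le_mrank[OF m A] J by blast
  ultimately have "card J = mrank \<B> A" using B(2) by linarith
  then show thesis using that J by blast
qed

lemma matroid_rank_function:
  assumes m: "matroid E \<B>"
  shows "rank_function E (mrank \<B>)"
  unfolding rank_function_def
proof (intro conjI allI impI)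
  have fE: "finite E" using matroidD(1)[OF m] .
  show "finite E" by fact
  show "mrank \<B> X \<le> card X" if "X \<subseteq> E" for X
  proof -
    obtain B where "B \<in> \<B>" "card (X \<inter> B) = mrank \<B> X" using mrank_attained[OF m] by blast
    moreover have "finite X" using that fE finite_subset by blast
    then have "card (X \<inter> B) \<le> card X" by (simp add: card_mono)
    ultimately show ?thesis by simp
  qed
  show "mrank \<B> X \<le> mrank \<B> Y" if XY: "X \<subseteq> Y \<and> Y \<subseteq> E" for X Y
  proof -
    obtain B where B: "B \<in> \<B>" "card (X \<inter> B) = mrank \<B> X" using mrank_attained[OF m] by blast
    have "indep \<B> (X \<inter> B)" using B(1) unfolding indep_def by blast
    moreover have "X \<inter> B \<subseteq> Y" using XY by blast
    ultimately show ?thesis using indep_card_le_mrank[OF m, of Y "X \<inter> B"] XY B(2) by simp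
  qed
  show "mrank \<B> (A \<union> C) + mrank \<B> (A \<inter> C) \<le> mrank \<B> A + mrank \<B> C"
    if AC: "A \<subseteq> E \<and> C \<subseteq> E" for A C
  proof -
    obtain B where B: "B \<in> \<B>" "card (A \<inter> C \<inter> B) = mrank \<B> (A \<inter> C)"
      using mrank_attained[OF m] by blast
    have "indep \<B> (A \<inter> C \<inter> B)" using B(1) unfolding indep_def by blast
    then obtain J where J: "A \<inter> C \<inter> B \<subseteq> J" "J \<subseteq> A \<union> C" "indep \<B> J" "card J = mrank \<B> (A \<union> C)"
      using indep_extend_mrank[OF m, of "A \<union> C" "A \<inter> C \<inter> B"] AC by blast
    have fJ: "finite J" using J(2) AC fE finite_subset by (meson le_sup_iff)
    have "card (J \<inter> A) \<le> mrank \<B> A" "card (J \<inter> C) \<le> mrank \<B> C"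
      using indep_card_le_mrank[OF m _ indep_subset[OF J(3)]] AC by auto
    moreover have "card J + card (J \<inter> A \<inter> C) = card (J \<inter> A) + card (J \<inter> C)"
    proof -
      have "(J \<inter> A) \<union> (J \<inter> C) = J" "(J \<inter> A) \<inter> (J \<inter> C) = J \<inter> A \<inter> C" using J(2) by blast+
      then show ?thesis using card_Un_Int[of "J \<inter> A" "J \<inter> C"] fJ by simp
    qed
    moreover have "card (A \<inter> C \<inter> B) \<le> card (J \<inter> A \<inter> C)" using J(1) fJ by (intro card_mono) auto
    ultimately show ?thesis using J(4) B(2) by linarith
  qed
qed

lemma matroid_eq_rank_bases:
  assumes m: "matroid E \<B>"
  shows "\<B> = rank_bases E (mrank \<B>)"
proof
  have fE: "finite E" using matroidD(1)[OF m] .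
  show "\<B> \<subseteq> rank_bases E (mrank \<B>)"
  proof
    fix B assume B: "B \<in> \<B>"
    have BE: "B \<subseteq> E" using matroidD(3)[OF m B] .
    have "indep \<B> B" using B unfolding indep_def by blast
    then have "card B \<le> mrank \<B> B" "card B \<le> mrank \<B> E"
      using indep_card_le_mrank[OF m] BE by blast+
    moreover have "mrank \<B> B \<le> card B" using rank_le_card[OF matroid_rank_function[OF m] BE] .
    moreover obtain B' where "B' \<in> \<B>" "card (E \<inter> B') = mrank \<B> E" using mrank_attained[OF m] by blast
    then have "mrank \<B> E = card B"
      using matroid_card_base_eq[OF m _ B] matroidD(3)[OF m] by (metis inf.absorb_iff2)
    ultimately show "B \<in> rank_bases E (mrank \<B>)" unfolding rank_bases_def using BE by auto
  qed
  show "rank_bases E (mrank \<B>) \<subseteq> \<B>"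
  proof
    fix X assume "X \<in> rank_bases E (mrank \<B>)"
    then have XE: "X \<subseteq> E" and X: "mrank \<B> X = card X" "card X = mrank \<B> E"
      unfolding rank_bases_def by auto
    obtain B where B: "B \<in> \<B>" "card (X \<inter> B) = mrank \<B> X" using mrank_attained[OF m] by blast
    have "finite X" using XE fE finite_subset by blast
    then have "X \<subseteq> B" using B(2) X(1) by (metis card_subset_eq inf_le1 le_iff_inf)
    moreover have "indep \<B> B" using B(1) unfolding indep_def by blast
    then have "card B \<le> card X" using indep_card_le_mrank[OF m _ _ matroidD(3)[OF m B(1)]] X(2) by simp
    ultimately have "X = B" using matroid_finite_base[OF m B(1)] by (metis card_seteq)
    then show "X \<in> \<B>" using B(1) by simp
  qed
qed

section \<open>Duality\<close>

definition dual_rank :: "'a set \<Rightarrow> ('a set \<Rightarrow> nat) \<Rightarrow> 'a set \<Rightarrow> nat" where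
  "dual_rank G r X = card X + r (G - X) - r G"

lemma dual_rank_add_rank:
  "rank_function G r \<Longrightarrow> X \<subseteq> G \<Longrightarrow> dual_rank G r X + r G = card X + r (G - X)"
  unfolding dual_rank_def using rank_le_card_add_rank_compl by fastforce

lemma rank_function_dual:
  assumes r: "rank_function G r"
  shows "rank_function G (dual_rank G r)"
  unfolding rank_function_def
proof (intro conjI allI impI)
  have fG: "finite G" using rank_functionD(1)[OF r] .
  show "finite G" by fact
  show "dual_rank G r X \<le> card X" if "X \<subseteq> G" for X
    using rank_mono[OF r, of "G - X" G] unfolding dual_rank_def by auto
  show "dual_rank G r X \<le> dual_rank G r Y" if XY: "X \<subseteq> Y \<and> Y \<subseteq> G" for X Y
  proof -
    have "(G - Y) \<union> (Y - X) = G - X" using XY by auto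
    then have "r (G - X) \<le> r (G - Y) + r (Y - X)"
      using rank_Un_le[OF r, of "G - Y" "Y - X"] XY by auto
    moreover have "r (Y - X) \<le> card (Y - X)" using rank_le_card[OF r, of "Y - X"] XY by auto
    moreover have "card Y = card X + card (Y - X)"
      using XY fG finite_subset card_eq_card_add_card_Diff by blast
    moreover have "X \<subseteq> G" using XY by blast
    then have "dual_rank G r X + r G = card X + r (G - X)" "dual_rank G r Y + r G = card Y + r (G - Y)"
      using dual_rank_add_rank[OF r] XY by auto
    ultimately show ?thesis by linarith
  qed
  show "dual_rank G r (X \<union> Y) + dual_rank G r (X \<inter> Y) \<le> dual_rank G r X + dual_rank G r Y"
    if XY: "X \<subseteq> G \<and> Y \<subseteq> G" for X Y
  proof -
    have "r (G - (X \<inter> Y)) + r (G - (X \<union> Y)) \<le> r (G - X) + r (G - Y)"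
      using rank_submodular[OF r, of "G - X" "G - Y"] by (simp add: Diff_Int Diff_Un)
    moreover have "finite X" "finite Y" using XY fG finite_subset by auto
    then have "card (X \<union> Y) + card (X \<inter> Y) = card X + card Y" using card_Un_Int[of X Y] by linarith
    moreover have "X \<union> Y \<subseteq> G" "X \<inter> Y \<subseteq> G" using XY by auto
    then have "dual_rank G r X + r G = card X + r (G - X)" "dual_rank G r Y + r G = card Y + r (G - Y)"
      "dual_rank G r (X \<union> Y) + r G = card (X \<union> Y) + r (G - (X \<union> Y))"
      "dual_rank G r (X \<inter> Y) + r G = card (X \<inter> Y) + r (G - (X \<inter> Y))"
      using dual_rank_add_rank[OF r] XY by blast+
    ultimately show ?thesis by linarith
  qed
qed

lemma dual_bases_rank_bases:
  assumes r: "rank_function G r"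
  shows "dual_bases G (rank_bases G r) = rank_bases G (dual_rank G r)"
proof -
  have fG: "finite G" using rank_functionD(1)[OF r] .
  have compl: "X \<in> rank_bases G r \<longleftrightarrow> G - X \<in> rank_bases G (dual_rank G r)" if X: "X \<subseteq> G" for X
  proof -
    have "G - (G - X) = X" using X by blast
    then have "dual_rank G r (G - X) + r G = card (G - X) + r X"
      using dual_rank_add_rank[OF r, of "G - X"] by simp
    moreover have "dual_rank G r G + r G = card G"
      using dual_rank_add_rank[OF r, of G] rank_empty[OF r] by simp
    moreover have "card G = card X + card (G - X)" using fG X by (rule card_eq_card_add_card_Diff)
    moreover have "r X \<le> card X" "r X \<le> r G" using rank_le_card[OF r] rank_mono[OF r] X by blast+
    ultimately have "(r X = card X \<and> card X = r G) \<longleftrightarrow>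
        (dual_rank G r (G - X) = card (G - X) \<and> card (G - X) = dual_rank G r G)"
      by (intro iffI conjI; linarith)
    then show ?thesis unfolding rank_bases_def using X by blast
  qed
  show ?thesis
  proof (intro equalityI subsetI)
    fix Y assume "Y \<in> dual_bases G (rank_bases G r)"
    then obtain X where "X \<in> rank_bases G r" "Y = G - X" unfolding dual_bases_def by blast
    then show "Y \<in> rank_bases G (dual_rank G r)" using compl[of X] unfolding rank_bases_def by blast
  next
    fix Y assume Y: "Y \<in> rank_bases G (dual_rank G r)"
    then have "Y \<subseteq> G" unfolding rank_bases_def by blast
    then have "G - Y \<in> rank_bases G r" "Y = G - (G - Y)" using compl[of "G - Y"] Y by (auto simp: double_diff)
    then show "Y \<in> dual_bases G (rank_bases G r)" unfolding dual_bases_def by blast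
  qed
qed

section \<open>Matroid intersection and matroid union\<close>

lemma min_max_uncross:
  assumes r1: "rank_function (insert e F) r1" and r2: "rank_function (insert e F) r2"
    and e: "e \<notin> F" and AB: "A \<subseteq> F" "B \<subseteq> F"
    and bound: "\<forall>X\<subseteq>insert e F. k \<le> r1 X + r2 (insert e F - X)"
  shows "2 * k \<le> (r1 A + r2 (F - A)) + (r1 (insert e B) + r2 (insert e (F - B)))"
proof -
  let ?G = "insert e F"
  have "A \<inter> insert e B = A \<inter> B" using e AB by auto
  then have "r1 (A \<union> insert e B) + r1 (A \<inter> B) \<le> r1 A + r1 (insert e B)"
    using rank_submodular[OF r1, of A "insert e B"] AB by auto
  moreover have "r2 (?G - (A \<inter> B)) + r2 (?G - (A \<union> insert e B)) \<le> r2 (F - A) + r2 (insert e (F - B))"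
  proof -
    have "(F - A) \<union> insert e (F - B) = ?G - (A \<inter> B)" "(F - A) \<inter> insert e (F - B) = ?G - (A \<union> insert e B)"
      using e AB by auto
    then show ?thesis using rank_submodular[OF r2, of "F - A" "insert e (F - B)"] by auto
  qed
  moreover have "A \<inter> B \<subseteq> ?G" "A \<union> insert e B \<subseteq> ?G" using AB by auto
  then have "k \<le> r1 (A \<inter> B) + r2 (?G - (A \<inter> B))" "k \<le> r1 (A \<union> insert e B) + r2 (?G - (A \<union> insert e B))"
    using bound by blast+
  ultimately show ?thesis by linarith
qed

lemma min_max_bound_contract:
  assumes r1: "rank_function (insert e F) r1" and r2: "rank_function (insert e F) r2"
    and e: "e \<notin> F" and A: "A \<subseteq> F" "r1 A + r2 (F - A) < k"
    and bound: "\<forall>X\<subseteq>insert e F. k \<le> r1 X + r2 (insert e F - X)"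
  shows "r1 {e} = 1" and "r2 {e} = 1"
    and "\<forall>B\<subseteq>F. k - 1 \<le> (r1 (insert e B) - 1) + (r2 (insert e (F - B)) - 1)"
proof -
  let ?G = "insert e F"
  have "e \<in> ?G" "A \<subseteq> ?G" "F - A \<subseteq> ?G" using A by auto
  have "?G - insert e A = F - A" using e by blast
  then have "k \<le> r1 (insert e A) + r2 (F - A)" using bound \<open>A \<subseteq> ?G\<close> by (metis insert_subset \<open>e \<in> ?G\<close>)
  then show e1: "r1 {e} = 1"
    using A rank_insert_le[OF r1 \<open>A \<subseteq> ?G\<close> \<open>e \<in> ?G\<close>] rank_singleton_le[OF r1 \<open>e \<in> ?G\<close>] by linarith
  have "?G - A = insert e (F - A)" using A e by blast
  then have "k \<le> r1 A + r2 (insert e (F - A))" using bound \<open>A \<subseteq> ?G\<close> by metis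
  then show e2: "r2 {e} = 1"
    using A rank_insert_le[OF r2 \<open>F - A \<subseteq> ?G\<close> \<open>e \<in> ?G\<close>] rank_singleton_le[OF r2 \<open>e \<in> ?G\<close>] by linarith
  show "\<forall>B\<subseteq>F. k - 1 \<le> (r1 (insert e B) - 1) + (r2 (insert e (F - B)) - 1)"
  proof (intro allI impI)
    fix B assume B: "B \<subseteq> F"
    have "1 \<le> r1 (insert e B)" "1 \<le> r2 (insert e (F - B))"
      using rank_mono[OF r1, of "{e}" "insert e B"] rank_mono[OF r2, of "{e}" "insert e (F - B)"] e1 e2 B
      by auto
    then show "k - 1 \<le> (r1 (insert e B) - 1) + (r2 (insert e (F - B)) - 1)"
      using min_max_uncross[OF r1 r2 e A(1) B bound] A(2) by linarith
  qed
qed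

text \<open>By induction on G: if the bound
  fails on G - e, then e is a non-loop of both matroids, and by uncrossing the bound k - 1 holds
  for their contractions by e.\<close>

lemma exists_common_indep:
  assumes "rank_function G r1" "rank_function G r2" "\<forall>A\<subseteq>G. k \<le> r1 A + r2 (G - A)"
  shows "\<exists>I\<subseteq>G. r1 I = card I \<and> r2 I = card I \<and> k \<le> card I"
proof -
  have "finite G" using assms(1) rank_functionD(1) by blast
  then show ?thesis using assms
  proof (induction G arbitrary: r1 r2 k rule: finite_induct)
    case empty
    then have "k \<le> r1 {} + r2 {}" by simp
    then show ?case using rank_empty[OF empty.prems(1)] rank_empty[OF empty.prems(2)] by simp
  next
    case (insert e F)
    let ?G = "insert e F"
    note r1 = insert.prems(1) and r2 = insert.prems(2) and bound = insert.prems(3)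
    have F: "F \<subseteq> ?G" by blast
    show ?case
    proof (cases "\<forall>A\<subseteq>F. k \<le> r1 A + r2 (F - A)")
      case True
      then have "\<exists>I\<subseteq>F. r1 I = card I \<and> r2 I = card I \<and> k \<le> card I"
        using insert.IH[OF rank_function_subset[OF r1 F] rank_function_subset[OF r2 F]] by blast
      then show ?thesis using F by blast
    next
      case False
      then obtain A where A: "A \<subseteq> F" "r1 A + r2 (F - A) < k" by (auto simp: not_le)
      note contract = min_max_bound_contract[OF r1 r2 insert.hyps(2) A bound]
      have "?G - {e} = F" using insert.hyps(2) by blast
      then have c1: "rank_function F (\<lambda>X. r1 (insert e X) - 1)"
        and c2: "rank_function F (\<lambda>X. r2 (insert e X) - 1)"
        using rank_function_contract[OF r1 _ contract(1)] rank_function_contract[OF r2 _ contract(2)] by auto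
      obtain I where I: "I \<subseteq> F" "r1 (insert e I) - 1 = card I" "r2 (insert e I) - 1 = card I"
        "k - 1 \<le> card I"
        using insert.IH[OF c1 c2 contract(3)] by blast
      have "1 \<le> r1 (insert e I)" "1 \<le> r2 (insert e I)"
        using rank_mono[OF r1, of "{e}" "insert e I"] rank_mono[OF r2, of "{e}" "insert e I"]
          contract(1,2) I(1) by auto
      moreover have "finite I" "e \<notin> I" using I(1) insert.hyps finite_subset by blast+
      then have "card (insert e I) = card I + 1" by simp
      moreover have "insert e I \<subseteq> ?G" using I(1) by blast
      ultimately show ?thesis using I(2-4) by (intro exI[of _ "insert e I"]) auto
    qed
  qed
qed

lemma matroid_partition:
  assumes r1: "rank_function X r1" and r2: "rank_function X r2"
    and cover: "\<forall>T\<subseteq>X. card T \<le> r1 T + r2 T"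
  shows "\<exists>I1 I2. I1 \<union> I2 = X \<and> r1 I1 = card I1 \<and> r2 I2 = card I2"
proof -
  have fX: "finite X" using rank_functionD(1)[OF r1] .
  have "card X - r2 X \<le> r1 A + dual_rank X r2 (X - A)" if A: "A \<subseteq> X" for A
  proof -
    have "X - (X - A) = A" using A by blast
    then have "dual_rank X r2 (X - A) + r2 X = card (X - A) + r2 A"
      using dual_rank_add_rank[OF r2, of "X - A"] by simp
    moreover have "card X = card A + card (X - A)" using fX A by (rule card_eq_card_add_card_Diff)
    moreover have "card A \<le> r1 A + r2 A" using cover A by blast
    ultimately show ?thesis by linarith
  qed
  then obtain I where I: "I \<subseteq> X" "r1 I = card I" "dual_rank X r2 I = card I" "card X - r2 X \<le> card I"
    using exists_common_indep[OF r1 rank_function_dual[OF r2], of "card X - r2 X"] by blast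
  \<comment> \<open>Independence of I in the dual means that X - I spans; as I is large, X - I is independent.\<close>
  have "dual_rank X r2 I + r2 X = card I + r2 (X - I)" using dual_rank_add_rank[OF r2 I(1)] .
  moreover have "r2 (X - I) \<le> card (X - I)" using rank_le_card[OF r2, of "X - I"] by blast
  moreover have "r2 X \<le> card X" using rank_le_card[OF r2, of X] by blast
  moreover have "card X = card I + card (X - I)" using fX I(1) by (rule card_eq_card_add_card_Diff)
  ultimately have "r2 (X - I) = card (X - I)" using I(3,4) by linarith
  moreover have "I \<union> (X - I) = X" using I(1) by blast
  ultimately show ?thesis using I(2) by blast
qed

text \<open>Nash-Williams' formula for the rank function of the union of two matroids.\<close>

definition union_rank :: "('a set \<Rightarrow> nat) \<Rightarrow> ('a set \<Rightarrow> nat) \<Rightarrow> 'a set \<Rightarrow> nat" where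
  "union_rank r1 r2 A = Min ((\<lambda>T. card (A - T) + r1 T + r2 T) ` Pow A)"

lemma union_rank_le: "finite A \<Longrightarrow> T \<subseteq> A \<Longrightarrow> union_rank r1 r2 A \<le> card (A - T) + r1 T + r2 T"
  unfolding union_rank_def by (rule Min_le) auto

lemma union_rank_attained:
  assumes "finite A"
  obtains T where "T \<subseteq> A" "union_rank r1 r2 A = card (A - T) + r1 T + r2 T"
proof -
  have "union_rank r1 r2 A \<in> (\<lambda>T. card (A - T) + r1 T + r2 T) ` Pow A"
    unfolding union_rank_def using assms by (intro Min_in) auto
  then show thesis using that by auto
qed

lemma rank_function_union:
  assumes r1: "rank_function G r1" and r2: "rank_function G r2"
  shows "rank_function G (union_rank r1 r2)"
  unfolding rank_function_def
proof (intro conjI allI impI)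
  have fG: "finite G" using rank_functionD(1)[OF r1] .
  show "finite G" by fact
  show "union_rank r1 r2 X \<le> card X" if "X \<subseteq> G" for X
    using union_rank_le[of X "{}" r1 r2] rank_empty[OF r1] rank_empty[OF r2] that fG finite_subset
    by fastforce
  show "union_rank r1 r2 X \<le> union_rank r1 r2 Y" if XY: "X \<subseteq> Y \<and> Y \<subseteq> G" for X Y
  proof -
    have fY: "finite Y" using XY fG finite_subset by blast
    obtain T where T: "T \<subseteq> Y" "union_rank r1 r2 Y = card (Y - T) + r1 T + r2 T"
      using union_rank_attained[OF fY] by blast
    have "union_rank r1 r2 X \<le> card (X - T \<inter> X) + r1 (T \<inter> X) + r2 (T \<inter> X)"
      using union_rank_le[of X "T \<inter> X"] XY fY finite_subset by blast
    moreover have "card (X - T \<inter> X) \<le> card (Y - T)" using XY fY by (intro card_mono) auto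
    moreover have "r1 (T \<inter> X) \<le> r1 T" "r2 (T \<inter> X) \<le> r2 T"
      using rank_mono[OF r1, of "T \<inter> X" T] rank_mono[OF r2, of "T \<inter> X" T] T XY by auto
    ultimately show ?thesis using T by linarith
  qed
  show "union_rank r1 r2 (A \<union> C) + union_rank r1 r2 (A \<inter> C) \<le> union_rank r1 r2 A + union_rank r1 r2 C"
    if AC: "A \<subseteq> G \<and> C \<subseteq> G" for A C
  proof -
    have fA: "finite A" and fC: "finite C" using AC fG finite_subset by blast+
    obtain TA where TA: "TA \<subseteq> A" "union_rank r1 r2 A = card (A - TA) + r1 TA + r2 TA"
      using union_rank_attained[OF fA] by blast
    obtain TC where TC: "TC \<subseteq> C" "union_rank r1 r2 C = card (C - TC) + r1 TC + r2 TC"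
      using union_rank_attained[OF fC] by blast
    let ?P = "(A \<union> C) - (TA \<union> TC)" and ?Q = "(A \<inter> C) - (TA \<inter> TC)"
    have "union_rank r1 r2 (A \<union> C) \<le> card ?P + r1 (TA \<union> TC) + r2 (TA \<union> TC)"
      "union_rank r1 r2 (A \<inter> C) \<le> card ?Q + r1 (TA \<inter> TC) + r2 (TA \<inter> TC)"
      using union_rank_le[of "A \<union> C" "TA \<union> TC" r1 r2] union_rank_le[of "A \<inter> C" "TA \<inter> TC" r1 r2] fA fC TA TC
      by auto
    moreover have "r1 (TA \<union> TC) + r1 (TA \<inter> TC) \<le> r1 TA + r1 TC"
      "r2 (TA \<union> TC) + r2 (TA \<inter> TC) \<le> r2 TA + r2 TC"
      using rank_submodular[OF r1, of TA TC] rank_submodular[OF r2, of TA TC] TA TC AC by auto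
    moreover have "card ?P + card ?Q = card (A - TA) + card (C - TC)"
    proof -
      have "?P \<union> ?Q = (A - TA) \<union> (C - TC)" "?P \<inter> ?Q = (A - TA) \<inter> (C - TC)" using TA TC by auto
      then show ?thesis using card_Un_Int[of ?P ?Q] card_Un_Int[of "A - TA" "C - TC"] fA fC by simp
    qed
    ultimately show ?thesis using TA TC by linarith
  qed
qed

lemma union_rank_eq_card_iff:
  assumes r1: "rank_function G r1" and r2: "rank_function G r2" and X: "X \<subseteq> G"
  shows "union_rank r1 r2 X = card X \<longleftrightarrow> (\<exists>I1 I2. I1 \<union> I2 = X \<and> r1 I1 = card I1 \<and> r2 I2 = card I2)"
proof
  have fX: "finite X" using X rank_functionD(1)[OF r1] finite_subset by blast
  assume u: "union_rank r1 r2 X = card X"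
  have "card T \<le> r1 T + r2 T" if T: "T \<subseteq> X" for T
    using union_rank_le[OF fX T, of r1 r2] u card_eq_card_add_card_Diff[OF fX T] by linarith
  then show "\<exists>I1 I2. I1 \<union> I2 = X \<and> r1 I1 = card I1 \<and> r2 I2 = card I2"
    using matroid_partition[OF rank_function_subset[OF r1 X] rank_function_subset[OF r2 X]] by blast
next
  have fX: "finite X" using X rank_functionD(1)[OF r1] finite_subset by blast
  assume "\<exists>I1 I2. I1 \<union> I2 = X \<and> r1 I1 = card I1 \<and> r2 I2 = card I2"
  then obtain I1 I2 where I: "I1 \<union> I2 = X" "r1 I1 = card I1" "r2 I2 = card I2" by blast
  obtain T where T: "T \<subseteq> X" "union_rank r1 r2 X = card (X - T) + r1 T + r2 T"
    using union_rank_attained[OF fX] by blast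
  have "I1 \<subseteq> G" "I2 \<subseteq> G" using I X by auto
  then have "r1 (I1 \<inter> T) = card (I1 \<inter> T)" "r2 (I2 \<inter> T) = card (I2 \<inter> T)"
    using rank_indep_subset[OF r1 _ I(2)] rank_indep_subset[OF r2 _ I(3)] by auto
  moreover have "r1 (I1 \<inter> T) \<le> r1 T" "r2 (I2 \<inter> T) \<le> r2 T"
    using rank_mono[OF r1, of "I1 \<inter> T" T] rank_mono[OF r2, of "I2 \<inter> T" T] T X by auto
  moreover have "card T \<le> card (I1 \<inter> T) + card (I2 \<inter> T)"
    using card_Un_le[of "I1 \<inter> T" "I2 \<inter> T"] I(1) T by (metis Int_Un_distrib2 inf.absorb_iff2)
  moreover have "union_rank r1 r2 X \<le> card X" using rank_le_card[OF rank_function_union[OF r1 r2] X] .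
  ultimately show "union_rank r1 r2 X = card X"
    using T card_eq_card_add_card_Diff[OF fX T(1)] by linarith
qed

lemma maximal_members_eq_rank_bases:
  assumes r: "rank_function G r"
    and indep: "\<And>Y. Y \<in> U \<Longrightarrow> Y \<subseteq> G \<and> r Y = card Y"
    and cover: "\<And>X. X \<subseteq> G \<Longrightarrow> r X = card X \<Longrightarrow> \<exists>Y\<in>U. X \<subseteq> Y"
  shows "{X \<in> U. \<not> (\<exists>Y\<in>U. X \<subset> Y)} = rank_bases G r"
proof (intro equalityI subsetI)
  fix X assume "X \<in> {X \<in> U. \<not> (\<exists>Y\<in>U. X \<subset> Y)}"
  then have X: "X \<in> U" and max: "\<not> (\<exists>Y\<in>U. X \<subset> Y)" by auto
  obtain B where B: "B \<in> rank_bases G r" "X \<subseteq> B" using rank_bases_extend[OF r] indep[OF X] by blast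
  then obtain Y where "Y \<in> U" "B \<subseteq> Y" using cover unfolding rank_bases_def by blast
  then have "X = B" using max B(2) by blast
  then show "X \<in> rank_bases G r" using B(1) by simp
next
  fix X assume X: "X \<in> rank_bases G r"
  then have XG: "X \<subseteq> G" and "r X = card X" and cX: "card X = r G" unfolding rank_bases_def by auto
  then obtain Y where Y: "Y \<in> U" "X \<subseteq> Y" using cover by blast
  have larger: "card Y \<le> card X" if "Y \<in> U" for Y
  proof -
    have "Y \<subseteq> G" "r Y = card Y" using indep[OF that] by auto
    then show ?thesis using rank_mono[OF r, of Y G] cX by simp
  qed
  have "finite Y" using indep[OF Y(1)] rank_functionD(1)[OF r] finite_subset by blast
  then have "X = Y" using Y(2) larger[OF Y(1)] by (rule card_seteq)
  moreover have "\<not> (\<exists>Y'\<in>U. X \<subset> Y')"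
  proof
    assume "\<exists>Y'\<in>U. X \<subset> Y'"
    then obtain Y' where Y': "Y' \<in> U" "X \<subset> Y'" by blast
    moreover have "finite Y'" using indep[OF Y'(1)] rank_functionD(1)[OF r] finite_subset by blast
    ultimately show False using larger[OF Y'(1)] psubset_card_mono[of Y' X] by simp
  qed
  ultimately show "X \<in> {X \<in> U. \<not> (\<exists>Y\<in>U. X \<subset> Y)}" using Y(1) by blast
qed

lemma union_bases_rank_bases:
  assumes r1: "rank_function G r1" and r2: "rank_function G r2"
  shows "union_bases (rank_bases G r1) (rank_bases G r2) = rank_bases G (union_rank r1 r2)"
proof -
  let ?U = "{B1 \<union> B2 | B1 B2. B1 \<in> rank_bases G r1 \<and> B2 \<in> rank_bases G r2}"
  have "Y \<subseteq> G \<and> union_rank r1 r2 Y = card Y" if Y: "Y \<in> ?U" for Y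
  proof -
    obtain B1 B2 where B: "Y = B1 \<union> B2" "B1 \<in> rank_bases G r1" "B2 \<in> rank_bases G r2"
      using Y by blast
    then have YG: "Y \<subseteq> G" and "r1 B1 = card B1" "r2 B2 = card B2" unfolding rank_bases_def by auto
    then have "union_rank r1 r2 Y = card Y" using union_rank_eq_card_iff[OF r1 r2 YG] B(1) by blast
    then show ?thesis using YG by blast
  qed
  moreover have "\<exists>Y\<in>?U. X \<subseteq> Y" if X: "X \<subseteq> G" "union_rank r1 r2 X = card X" for X
  proof -
    obtain I1 I2 where I: "I1 \<union> I2 = X" "r1 I1 = card I1" "r2 I2 = card I2"
      using union_rank_eq_card_iff[OF r1 r2 X(1)] X(2) by blast
    have "I1 \<subseteq> G" "I2 \<subseteq> G" using I(1) X(1) by blast+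
    obtain B1 where B1: "B1 \<in> rank_bases G r1" "I1 \<subseteq> B1"
      using rank_bases_extend[OF r1 \<open>I1 \<subseteq> G\<close> I(2)] by blast
    obtain B2 where B2: "B2 \<in> rank_bases G r2" "I2 \<subseteq> B2"
      using rank_bases_extend[OF r2 \<open>I2 \<subseteq> G\<close> I(3)] by blast
    have "B1 \<union> B2 \<in> ?U" using B1(1) B2(1) by blast
    moreover have "X \<subseteq> B1 \<union> B2" using I(1) B1(2) B2(2) by blast
    ultimately show ?thesis by blast
  qed
  ultimately show ?thesis
    unfolding union_bases_def Let_def by (rule maximal_members_eq_rank_bases[OF rank_function_union[OF r1 r2]])
qed

section \<open>Uniform density\<close>

definition uniformly_dense_rank :: "'a set \<Rightarrow> ('a set \<Rightarrow> nat) \<Rightarrow> bool" where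
  "uniformly_dense_rank E r \<longleftrightarrow> (\<forall>A\<subseteq>E. r E * card A \<le> card E * r A)"

lemma uniformly_dense_rank_bases_iff:
  assumes r: "rank_function E r"
  shows "uniformly_dense E (rank_bases E r) \<longleftrightarrow> uniformly_dense_rank E r"
proof -
  have density: "density (rank_bases E r) X = (if r X = 0 then \<infinity> else ereal (card X / r X))"
    if "X \<subseteq> E" for X
    unfolding density_def using mrank_rank_bases[OF r that] by simp
  have iff: "density (rank_bases E r) A \<le> density (rank_bases E r) E \<longleftrightarrow> r E * card A \<le> card E * r A"
    if A: "A \<subseteq> E" "A \<noteq> {}" for A
  proof -
    have "card A > 0" using A rank_functionD(1)[OF r] finite_subset card_gt_0_iff by blast
    consider "r E = 0" | "r E > 0" "r A = 0" | "r E > 0" "r A > 0" by blast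
    then show ?thesis
    proof cases
      case 1
      then show ?thesis using density[OF order_refl] by simp
    next
      case 2
      then show ?thesis using density[OF order_refl] density[OF A(1)] \<open>card A > 0\<close> by simp
    next
      case 3
      then show ?thesis using density[OF order_refl] density[OF A(1)]
        by (simp add: divide_le_eq le_divide_eq mult.commute flip: of_nat_mult)
    qed
  qed
  show ?thesis
    unfolding uniformly_dense_def uniformly_dense_rank_def
  proof (intro iffI allI impI)
    fix A assume dense: "\<forall>A. A \<subseteq> E \<and> A \<noteq> {} \<longrightarrow> density (rank_bases E r) A \<le> density (rank_bases E r) E"
      and A: "A \<subseteq> E"
    show "r E * card A \<le> card E * r A"
      using iff[OF A] dense A by (cases "A = {}") auto
  next
    fix A assume dense: "\<forall>A\<subseteq>E. r E * card A \<le> card E * r A" and A: "A \<subseteq> E \<and> A \<noteq> {}"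
    then show "density (rank_bases E r) A \<le> density (rank_bases E r) E" using iff by blast
  qed
qed

lemma uniformly_dense_rank_dual:
  assumes r: "rank_function E r" and dense: "uniformly_dense_rank E r"
  shows "uniformly_dense_rank E (dual_rank E r)"
  unfolding uniformly_dense_rank_def
proof (intro allI impI)
  fix A assume A: "A \<subseteq> E"
  have "E - (E - A) = A" using A by blast
  then have "dual_rank E r A + r E = card A + r (E - A)" using dual_rank_add_rank[OF r A] by simp
  then have "card E * dual_rank E r A + card E * r E = card E * card A + card E * r (E - A)"
    by (metis add_mult_distrib2)
  moreover have "dual_rank E r E + r E = card E" using dual_rank_add_rank[OF r, of E] rank_empty[OF r] by simp
  then have "dual_rank E r E * card A + r E * card A = card E * card A" by (metis add_mult_distrib)
  moreover have "card E = card A + card (E - A)"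
    using rank_functionD(1)[OF r] A by (rule card_eq_card_add_card_Diff)
  then have "card E * r E = r E * card A + r E * card (E - A)" by (simp add: algebra_simps)
  moreover have "r E * card (E - A) \<le> card E * r (E - A)" using dense unfolding uniformly_dense_rank_def by blast
  ultimately show "dual_rank E r E * card A \<le> card E * dual_rank E r A" by linarith
qed

lemma uniformly_dense_rank_union:
  assumes r1: "rank_function E r1" and r2: "rank_function E r2"
    and dense1: "uniformly_dense_rank E r1" and dense2: "uniformly_dense_rank E r2"
  shows "uniformly_dense_rank E (union_rank r1 r2)"
  unfolding uniformly_dense_rank_def
proof (intro allI impI)
  fix C assume C: "C \<subseteq> E"
  have fE: "finite E" using rank_functionD(1)[OF r1] .
  have fC: "finite C" using C fE finite_subset by blast
  let ?u = "union_rank r1 r2" and ?n = "card E"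
  obtain T where T: "T \<subseteq> C" "?u C = card (C - T) + r1 T + r2 T" using union_rank_attained[OF fC] by blast
  have TE: "T \<subseteq> E" using T C by blast
  have "?u E \<le> r1 E + r2 E" using union_rank_le[OF fE order_refl, of r1 r2] by simp
  have "?u E \<le> ?n" using rank_le_card[OF rank_function_union[OF r1 r2]] by blast
  have "?u E * card C = ?u E * card (C - T) + ?u E * card T"
    using card_eq_card_add_card_Diff[OF fC T(1)] by (simp add: algebra_simps)
  also have "\<dots> \<le> ?n * card (C - T) + (r1 E + r2 E) * card T"
    using \<open>?u E \<le> ?n\<close> \<open>?u E \<le> r1 E + r2 E\<close> by (intro add_mono mult_right_mono) auto
  also have "\<dots> = ?n * card (C - T) + r1 E * card T + r2 E * card T" by (simp add: algebra_simps)
  also have "\<dots> \<le> ?n * card (C - T) + ?n * r1 T + ?n * r2 T"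
    using dense1 dense2 TE unfolding uniformly_dense_rank_def by (intro add_mono) auto
  also have "\<dots> = ?n * ?u C" using T(2) by (simp add: algebra_simps)
  finally show "?u E * card C \<le> ?n * ?u C" .
qed

theorem corollary2p8:
  fixes E :: "'a set" and \<B>1 \<B>2 :: "'a set set"
  assumes "matroid E \<B>1" and "matroid E \<B>2"
    and "loopless E \<B>1" and "loopless E \<B>2"
    and "uniformly_dense E \<B>1" and "uniformly_dense E \<B>2"
  shows "matroid E (inter_bases E \<B>1 \<B>2) \<and> uniformly_dense E (inter_bases E \<B>1 \<B>2)"
proof -
  define r1 r2 where "r1 = mrank \<B>1" and "r2 = mrank \<B>2"
  have r: "rank_function E r1" "rank_function E r2"
    unfolding r1_def r2_def using matroid_rank_function assms(1,2) by blast+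
  have bases: "\<B>1 = rank_bases E r1" "\<B>2 = rank_bases E r2"
    unfolding r1_def r2_def using matroid_eq_rank_bases assms(1,2) by blast+
  have s: "rank_function E (dual_rank E r1)" "rank_function E (dual_rank E r2)"
    using rank_function_dual r by blast+
  let ?r = "dual_rank E (union_rank (dual_rank E r1) (dual_rank E r2))"
  have r_inter: "rank_function E ?r" using rank_function_dual[OF rank_function_union[OF s]] .
  have inter: "inter_bases E \<B>1 \<B>2 = rank_bases E ?r"
    unfolding inter_bases_def bases dual_bases_rank_bases[OF r(1)] dual_bases_rank_bases[OF r(2)]
      union_bases_rank_bases[OF s] dual_bases_rank_bases[OF rank_function_union[OF s]] ..
  have "uniformly_dense_rank E r1" "uniformly_dense_rank E r2"
    using assms(5,6) unfolding bases by (simp_all add: uniformly_dense_rank_bases_iff r)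
  then have "uniformly_dense_rank E ?r"
    using uniformly_dense_rank_dual[OF rank_function_union[OF s] uniformly_dense_rank_union[OF s]]
      uniformly_dense_rank_dual r by blast
  then show ?thesis
    unfolding inter using rank_bases_matroid[OF r_inter] uniformly_dense_rank_bases_iff[OF r_inter] by simp
qed

end
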